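(* Let $p$ be a prime and let $B$ be a finite brace whose order is a power of $p$. If $B$ is supersoluble, then $B$ is centrally nilpotent.
   Context: A brace (skew left brace) is a set $B$ with two binary operations $+$ and $\cdot$ such that $(B,+)$ and $(B,\cdot)$ are groups and $a(b+c)=ab-a+ac$ for all $a,b,c\in B$. $\lambda_a(b)=-a+ab$ defines a homomorphism $\lambda\colon(B,\cdot)\to\operatorname{Aut}(B,+)$. An ideal is a subset that is a subgroup of both groups, normal in both, and invariant under all $\lambda_b$; quotients by ideals are braces. $\operatorname{Soc}(B)=\operatorname{Ker}\lambda\cap Z(B,+)$, $\zeta(B)=\operatorname{Soc}(B)\cap Z(B,\cdot)$; $\zeta_0(B)=\{0\}$, $\zeta_{k+1}(B)/\zeta_k(B)=\zeta(B/\zeta_k(B))$; $B$ is centrally nilpotent if $B=\zeta_m(B)$ for some $m$. $B$ is supersoluble if there is a finite chain of ideals $\{0\}=I_0\le\dots\le I_n=B$ such that for each $i$, either $(I_{i+1}/I_i,+)$ is infinite cyclic and $I_{i+1}/I_i\le\operatorname{Soc}(B/I_i)$, or $I_{i+1}/I_i$ has prime order. *)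

theory Defs
  imports "HOL-Algebra.Algebra" "HOL-Computational_Algebra.Primes"
begin

definition brace :: "'a monoid \<Rightarrow> 'a monoid \<Rightarrow> bool" where
  "brace A M \<longleftrightarrow> group A \<and> group M \<and> carrier A = carrier M \<and>
     (\<forall>a\<in>carrier A. \<forall>b\<in>carrier A. \<forall>c\<in>carrier A.
        a \<otimes>\<^bsub>M\<^esub> (b \<otimes>\<^bsub>A\<^esub> c) =
          (a \<otimes>\<^bsub>M\<^esub> b) \<otimes>\<^bsub>A\<^esub> inv\<^bsub>A\<^esub> a \<otimes>\<^bsub>A\<^esub> (a \<otimes>\<^bsub>M\<^esub> c))"

definition brace_lambda :: "'a monoid \<Rightarrow> 'a monoid \<Rightarrow> 'a \<Rightarrow> 'a \<Rightarrow> 'a" where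
  "brace_lambda A M a b = inv\<^bsub>A\<^esub> a \<otimes>\<^bsub>A\<^esub> (a \<otimes>\<^bsub>M\<^esub> b)"

definition brace_ideal :: "'a monoid \<Rightarrow> 'a monoid \<Rightarrow> 'a set \<Rightarrow> bool" where
  "brace_ideal A M I \<longleftrightarrow> normal I A \<and> normal I M \<and>
     (\<forall>b\<in>carrier A. brace_lambda A M b ` I \<subseteq> I)"

definition brace_soc :: "'a monoid \<Rightarrow> 'a monoid \<Rightarrow> 'a set" where
  "brace_soc A M = {a \<in> carrier A. (\<forall>b\<in>carrier A. brace_lambda A M a b = b) \<and>
       (\<forall>b\<in>carrier A. a \<otimes>\<^bsub>A\<^esub> b = b \<otimes>\<^bsub>A\<^esub> a)}"

definition brace_center :: "'a monoid \<Rightarrow> 'a monoid \<Rightarrow> 'a set" where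
  "brace_center A M = {a \<in> brace_soc A M. \<forall>b\<in>carrier M. a \<otimes>\<^bsub>M\<^esub> b = b \<otimes>\<^bsub>M\<^esub> a}"

text \<open>The quotient brace B/I is (A Mod I, M Mod I) (cosets). Upper central series:
  zeta_0 = {0}, zeta_{k+1}/zeta_k = zeta(B/zeta_k), i.e.
  zeta_{k+1} = {x. x + zeta_k \<in> zeta(B/zeta_k)}.\<close>
fun upper_zeta :: "nat \<Rightarrow> 'a monoid \<Rightarrow> 'a monoid \<Rightarrow> 'a set" where
  "upper_zeta 0 A M = {\<one>\<^bsub>A\<^esub>}"
| "upper_zeta (Suc k) A M =
     (let I = upper_zeta k A M in
      {x \<in> carrier A. I #>\<^bsub>A\<^esub> x \<in> brace_center (A Mod I) (M Mod I)})"

definition centrally_nilpotent :: "'a monoid \<Rightarrow> 'a monoid \<Rightarrow> bool" where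
  "centrally_nilpotent A M \<longleftrightarrow> (\<exists>m. upper_zeta m A M = carrier A)"

definition quot_img :: "'a monoid \<Rightarrow> 'a set \<Rightarrow> 'a set \<Rightarrow> 'a set set" where
  "quot_img A J I = (\<lambda>x. I #>\<^bsub>A\<^esub> x) ` J"

definition supersoluble :: "'a monoid \<Rightarrow> 'a monoid \<Rightarrow> bool" where
  "supersoluble A M \<longleftrightarrow> (\<exists>(I :: nat \<Rightarrow> 'a set) n.
     I 0 = {\<one>\<^bsub>A\<^esub>} \<and> I n = carrier A \<and>
     (\<forall>i\<le>n. brace_ideal A M (I i)) \<and>
     (\<forall>i<n. I i \<subseteq> I (Suc i) \<and>
        ((infinite (quot_img A (I (Suc i)) (I i)) \<and>
          cyclic_group ((A Mod I i)\<lparr>carrier := quot_img A (I (Suc i)) (I i)\<rparr>) \<and>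
          quot_img A (I (Suc i)) (I i) \<subseteq> brace_soc (A Mod I i) (M Mod I i))
         \<or> Factorial_Ring.prime (card (quot_img A (I (Suc i)) (I i))))))"

end

theory Submission
  imports Defs
begin

text \<open>
  As B is finite, every factor I(i+1)/I(i) of the supersoluble series has prime order, and this
  prime is p because |B| is a power of p. Such a factor J is an ideal of the p-brace B/I(i), on
  which the p-groups (B/I(i),+) and (B/I(i),\<cdot>) act by conjugation and by \<lambda>, each action fixing 0.
  A nontrivial orbit would have size a positive power of p but would lie among the p - 1 nonzero
  elements of J; hence J is central in both groups and \<lambda> fixes it pointwise, i.e.
  J \<subseteq> \<zeta>(B/I(i)). Centrality modulo I(i) persists modulo any larger ideal, so induction gives
  I(i) \<subseteq> \<zeta>(i)(B), and I(n) = B.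
\<close>

section \<open>Centers and actions of p-groups\<close>

definition center :: "('a, 'b) monoid_scheme \<Rightarrow> 'a set" where
  "center G = {a \<in> carrier G. \<forall>b\<in>carrier G. a \<otimes>\<^bsub>G\<^esub> b = b \<otimes>\<^bsub>G\<^esub> a}"

lemma (in group) center_subgroup: "subgroup (center G) G"
proof (rule subgroupI)
  fix a assume "a \<in> center G"
  then have a: "a \<in> carrier G" and comm: "\<And>b. b \<in> carrier G \<Longrightarrow> a \<otimes> b = b \<otimes> a"
    by (auto simp: center_def)
  have "inv a \<otimes> b = b \<otimes> inv a" if b: "b \<in> carrier G" for b
  proof -
    have "inv a \<otimes> b = inv a \<otimes> (b \<otimes> a) \<otimes> inv a"
      using a b by (simp only: m_assoc inv_closed m_closed r_inv r_one)
    also have "\<dots> = inv a \<otimes> (a \<otimes> b) \<otimes> inv a" by (simp only: comm[OF b])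
    also have "\<dots> = b \<otimes> inv a"
      using a b by (simp only: m_assoc[symmetric] inv_closed m_closed l_inv l_one)
    finally show ?thesis .
  qed
  then show "inv a \<in> center G" using a by (simp add: center_def)
next
  fix a a' assume "a \<in> center G" "a' \<in> center G"
  then have a: "a \<in> carrier G" "a' \<in> carrier G"
    and comm: "\<And>b. b \<in> carrier G \<Longrightarrow> a \<otimes> b = b \<otimes> a" "\<And>b. b \<in> carrier G \<Longrightarrow> a' \<otimes> b = b \<otimes> a'"
    by (auto simp: center_def)
  have "a \<otimes> a' \<otimes> b = b \<otimes> (a \<otimes> a')" if b: "b \<in> carrier G" for b
  proof -
    have "a \<otimes> a' \<otimes> b = a \<otimes> b \<otimes> a'" using a b comm(2)[OF b] by (simp only: m_assoc)
    also have "\<dots> = b \<otimes> (a \<otimes> a')" using a b comm(1)[OF b] by (simp only: m_assoc[symmetric])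
    finally show ?thesis .
  qed
  then show "a \<otimes> a' \<in> center G" using a by (simp add: center_def)
qed (auto simp: center_def)

lemma (in group) central_subgroup_normal:
  assumes "subgroup H G" and "H \<subseteq> center G"
  shows "H \<lhd> G"
  using assms(1)
proof (rule normal_invI)
  fix x h assume x: "x \<in> carrier G" and h: "h \<in> H"
  then have "x \<otimes> h = h \<otimes> x" using assms(2) by (auto simp: center_def)
  then show "x \<otimes> h \<otimes> inv x \<in> H"
    using x h subgroup.mem_carrier[OF assms(1) h] by (simp add: m_assoc)
qed

lemma (in normal) preimage_normal:
  assumes "group_hom F G h"
  shows "{x \<in> carrier F. h x \<in> H} \<lhd> F"
proof -
  interpret h: group_hom F G h by (rule assms)
  have "subgroup {x \<in> carrier F. h x \<in> H} F"
    by (rule h.G.subgroupI) auto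
  then show ?thesis
    by (rule h.G.normal_invI) (auto simp: inv_op_closed2)
qed

lemma (in group) r_coset_eq_mono:
  assumes "subgroup I G" "subgroup Z G" "I \<subseteq> Z" "u \<in> carrier G" "v \<in> carrier G"
    and "I #> u = I #> v"
  shows "Z #> u = Z #> v"
proof -
  have "u \<in> I #> v" using rcos_self[OF assms(4,1)] assms(6) by simp
  also have "\<dots> \<subseteq> Z #> v" using assms(3) unfolding r_coset_def by blast
  finally have "u \<in> Z #> v" .
  then show ?thesis using repr_independence assms by blast
qed

lemma (in group_action) p_group_small_orbit_fixed:
  fixes p :: nat
  assumes ord: "order G = p ^ m" and p: "Factorial_Ring.prime p"
    and x: "x \<in> E" and small: "card (orbit G \<phi> x) < p" and g: "g \<in> carrier G"
  shows "\<phi> g x = x"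
proof -
  have "card (orbit G \<phi> x) dvd p ^ m"
    using orbit_stabilizer_theorem[OF x] ord by (metis dvd_triv_left)
  then obtain i where i: "card (orbit G \<phi> x) = p ^ i"
    using divides_primepow_nat[OF p] by auto
  with small have "i = 0"
    using power_less_imp_less_exp[OF prime_gt_1_nat[OF p], of i 1] by simp
  with i have "card (orbit G \<phi> x) = 1" by simp
  then obtain w where "orbit G \<phi> x = {w}" by (rule card_1_singletonE)
  moreover have "\<phi> g x \<in> orbit G \<phi> x" unfolding orbit_def using g by blast
  ultimately show ?thesis using orbit_refl[OF x] by simp
qed

lemma (in group_action) p_group_fixes_invariant_subset:
  fixes p :: nat
  assumes ord: "order G = p ^ m" and p: "Factorial_Ring.prime p"
    and J: "J \<subseteq> E" "finite J" "card J \<le> p"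
    and z: "z \<in> J" "\<And>g. g \<in> carrier G \<Longrightarrow> \<phi> g z = z"
    and inv: "\<And>g y. g \<in> carrier G \<Longrightarrow> y \<in> J \<Longrightarrow> \<phi> g y \<in> J"
    and y: "y \<in> J" and g: "g \<in> carrier G"
  shows "\<phi> g y = y"
proof (cases "y = z")
  case True
  then show ?thesis using z g by simp
next
  case False
  interpret G: group G using group_hom group_hom.axioms(1) by blast
  have yE: "y \<in> E" using y J by auto
  have "orbit G \<phi> y \<subseteq> J - {z}"
  proof
    fix w assume "w \<in> orbit G \<phi> y"
    then obtain h where h: "h \<in> carrier G" "w = \<phi> h y" unfolding orbit_def by auto
    have "\<phi> (inv h) w = y" using orbit_sym_aux[OF h(1) yE] h(2) by simp
    then have "w \<noteq> z" using z(2)[OF G.inv_closed[OF h(1)]] False by auto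
    then show "w \<in> J - {z}" using inv h y by auto
  qed
  then have "card (orbit G \<phi> y) \<le> card (J - {z})"
    using J(2) by (intro card_mono) auto
  also have "\<dots> < p" using J z prime_gt_0_nat[OF p] by (simp add: card_Diff_singleton)
  finally show ?thesis using p_group_small_orbit_fixed[OF ord p yE _ g] by blast
qed

lemma (in group) normal_subgroup_of_prime_order_central:
  fixes p :: nat
  assumes ord: "order G = p ^ m" and p: "Factorial_Ring.prime p"
    and J: "J \<lhd> G" "card J = p" and j: "j \<in> J" and g: "g \<in> carrier G"
  shows "g \<otimes> j = j \<otimes> g"
proof -
  interpret J: normal J G by (rule J(1))
  have jc: "j \<in> carrier G" using j J.subset by blast
  have "finite J" using J(2) prime_gt_0_nat[OF p] card_ge_0_finite by blast
  then have "(\<lambda>h \<in> carrier G. g \<otimes> h \<otimes> inv g) j = j"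
    using group_action.p_group_fixes_invariant_subset[OF action_by_conjugation ord p
        J.subset _ _ J.one_closed _ _ j g] J(2) J.subset J.inv_op_closed2
    by auto
  then have "g \<otimes> j \<otimes> inv g = j" using jc by simp
  then show ?thesis
    using g jc by (metis inv_solve_right m_closed)
qed

section \<open>Skew braces, their ideals and quotients\<close>

locale skew_brace =
  fixes A M :: "'a monoid"
  assumes brace: "brace A M"
begin

lemma group_A: "group A" and group_M: "group M" and carrier_M: "carrier M = carrier A"
  using brace unfolding brace_def by auto

sublocale A: group A by (rule group_A)
sublocale M: group M by (rule group_M)

lemma brace_distrib:
  "\<lbrakk>a \<in> carrier A; b \<in> carrier A; c \<in> carrier A\<rbrakk> \<Longrightarrow>
   a \<otimes>\<^bsub>M\<^esub> (b \<otimes>\<^bsub>A\<^esub> c) = (a \<otimes>\<^bsub>M\<^esub> b) \<otimes>\<^bsub>A\<^esub> inv\<^bsub>A\<^esub> a \<otimes>\<^bsub>A\<^esub> (a \<otimes>\<^bsub>M\<^esub> c)"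
  using brace unfolding brace_def by blast

lemma M_mult_closed [simp]: "\<lbrakk>a \<in> carrier A; b \<in> carrier A\<rbrakk> \<Longrightarrow> a \<otimes>\<^bsub>M\<^esub> b \<in> carrier A"
  and M_inv_closed [simp]: "a \<in> carrier A \<Longrightarrow> inv\<^bsub>M\<^esub> a \<in> carrier A"
  using carrier_M by auto

lemma M_assoc:
  "\<lbrakk>a \<in> carrier A; b \<in> carrier A; c \<in> carrier A\<rbrakk> \<Longrightarrow>
   a \<otimes>\<^bsub>M\<^esub> b \<otimes>\<^bsub>M\<^esub> c = a \<otimes>\<^bsub>M\<^esub> (b \<otimes>\<^bsub>M\<^esub> c)"
  using M.m_assoc carrier_M by simp

lemma one_M: "\<one>\<^bsub>M\<^esub> = \<one>\<^bsub>A\<^esub>"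
proof -
  have one: "\<one>\<^bsub>M\<^esub> \<in> carrier A" using carrier_M by auto
  have "\<one>\<^bsub>M\<^esub> \<otimes>\<^bsub>M\<^esub> (\<one>\<^bsub>M\<^esub> \<otimes>\<^bsub>A\<^esub> \<one>\<^bsub>M\<^esub>) = \<one>\<^bsub>M\<^esub> \<otimes>\<^bsub>A\<^esub> inv\<^bsub>A\<^esub> \<one>\<^bsub>M\<^esub> \<otimes>\<^bsub>A\<^esub> \<one>\<^bsub>M\<^esub>"
    using brace_distrib[OF one one one] one M.l_one[OF M.one_closed] by simp
  then have "\<one>\<^bsub>M\<^esub> \<otimes>\<^bsub>A\<^esub> \<one>\<^bsub>M\<^esub> = \<one>\<^bsub>M\<^esub>"
    using one M.l_one carrier_M by (simp add: A.m_assoc)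
  then show ?thesis using one by (simp add: A.l_cancel_one')
qed

lemma M_l_one [simp]: "a \<in> carrier A \<Longrightarrow> \<one>\<^bsub>A\<^esub> \<otimes>\<^bsub>M\<^esub> a = a"
  and M_l_inv [simp]: "a \<in> carrier A \<Longrightarrow> inv\<^bsub>M\<^esub> a \<otimes>\<^bsub>M\<^esub> a = \<one>\<^bsub>A\<^esub>"
  and M_r_inv [simp]: "a \<in> carrier A \<Longrightarrow> a \<otimes>\<^bsub>M\<^esub> inv\<^bsub>M\<^esub> a = \<one>\<^bsub>A\<^esub>"
  using carrier_M one_M by (metis M.l_one, metis M.l_inv, metis M.r_inv)

abbreviation lam :: "'a \<Rightarrow> 'a \<Rightarrow> 'a" where "lam \<equiv> brace_lambda A M"

lemma lam_closed [simp]: "\<lbrakk>a \<in> carrier A; b \<in> carrier A\<rbrakk> \<Longrightarrow> lam a b \<in> carrier A"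
  by (simp add: brace_lambda_def)

lemma M_mult_eq_add_lam: "\<lbrakk>a \<in> carrier A; b \<in> carrier A\<rbrakk> \<Longrightarrow> a \<otimes>\<^bsub>M\<^esub> b = a \<otimes>\<^bsub>A\<^esub> lam a b"
  by (simp add: brace_lambda_def A.m_assoc[symmetric])

lemma lam_add:
  "\<lbrakk>a \<in> carrier A; b \<in> carrier A; c \<in> carrier A\<rbrakk> \<Longrightarrow> lam a (b \<otimes>\<^bsub>A\<^esub> c) = lam a b \<otimes>\<^bsub>A\<^esub> lam a c"
  by (simp add: brace_lambda_def brace_distrib A.m_assoc)

lemma lam_one_left [simp]: "b \<in> carrier A \<Longrightarrow> lam \<one>\<^bsub>A\<^esub> b = b"
  by (simp add: brace_lambda_def)

lemma lam_one_right [simp]: "a \<in> carrier A \<Longrightarrow> lam a \<one>\<^bsub>A\<^esub> = \<one>\<^bsub>A\<^esub>"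
  using lam_add[of a "\<one>\<^bsub>A\<^esub>" "\<one>\<^bsub>A\<^esub>"] by (simp add: A.l_cancel_one')

lemma lam_mult:
  assumes a: "a \<in> carrier A" and b: "b \<in> carrier A" and c: "c \<in> carrier A"
  shows "lam (a \<otimes>\<^bsub>M\<^esub> b) c = lam a (lam b c)"
proof -
  have "(a \<otimes>\<^bsub>M\<^esub> b) \<otimes>\<^bsub>A\<^esub> lam (a \<otimes>\<^bsub>M\<^esub> b) c = a \<otimes>\<^bsub>M\<^esub> (b \<otimes>\<^bsub>A\<^esub> lam b c)"
    using a b c by (simp add: M_assoc M_mult_eq_add_lam[symmetric])
  also have "\<dots> = (a \<otimes>\<^bsub>M\<^esub> b) \<otimes>\<^bsub>A\<^esub> lam a (lam b c)"
    using a b c by (simp add: brace_distrib brace_lambda_def A.m_assoc)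
  finally show ?thesis using a b c by simp
qed

lemma lam_inv_cancel [simp]:
  "\<lbrakk>a \<in> carrier A; c \<in> carrier A\<rbrakk> \<Longrightarrow> lam a (lam (inv\<^bsub>M\<^esub> a) c) = c"
  "\<lbrakk>a \<in> carrier A; c \<in> carrier A\<rbrakk> \<Longrightarrow> lam (inv\<^bsub>M\<^esub> a) (lam a c) = c"
  by (simp_all add: lam_mult[symmetric])

lemma add_eq_M_mult_lam:
  "\<lbrakk>a \<in> carrier A; b \<in> carrier A\<rbrakk> \<Longrightarrow> a \<otimes>\<^bsub>A\<^esub> b = a \<otimes>\<^bsub>M\<^esub> lam (inv\<^bsub>M\<^esub> a) b"
  by (simp add: M_mult_eq_add_lam)

lemma lam_eq_iff: "\<lbrakk>a \<in> carrier A; b \<in> carrier A\<rbrakk> \<Longrightarrow> lam a b = b \<longleftrightarrow> a \<otimes>\<^bsub>M\<^esub> b = a \<otimes>\<^bsub>A\<^esub> b"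
  by (metis A.l_cancel M_mult_eq_add_lam lam_closed)

lemma lam_action: "group_action M (carrier A) (\<lambda>a. \<lambda>b \<in> carrier A. lam a b)"
proof -
  let ?\<phi> = "\<lambda>a. \<lambda>b \<in> carrier A. lam a b"
  have bij: "?\<phi> a \<in> Bij (carrier A)" if a: "a \<in> carrier A" for a
  proof -
    have "bij_betw (lam a) (carrier A) (carrier A)"
      by (rule bij_betwI[where g = "lam (inv\<^bsub>M\<^esub> a)"]) (use a in auto)
    then show ?thesis unfolding Bij_def by simp
  qed
  have "?\<phi> \<in> hom M (BijGroup (carrier A))"
  proof (rule homI)
    fix a b assume "a \<in> carrier M" "b \<in> carrier M"
    then have a: "a \<in> carrier A" and b: "b \<in> carrier A" using carrier_M by auto
    have "?\<phi> a \<otimes>\<^bsub>BijGroup (carrier A)\<^esub> ?\<phi> b = compose (carrier A) (?\<phi> a) (?\<phi> b)"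
      using bij[OF a] bij[OF b] by (simp add: BijGroup_def)
    also have "\<dots> = ?\<phi> (a \<otimes>\<^bsub>M\<^esub> b)"
      unfolding compose_def using a b by (intro restrict_ext) (simp add: lam_mult)
    finally show "?\<phi> (a \<otimes>\<^bsub>M\<^esub> b) = ?\<phi> a \<otimes>\<^bsub>BijGroup (carrier A)\<^esub> ?\<phi> b" by simp
  qed (use bij carrier_M in \<open>auto simp: BijGroup_def\<close>)
  then show ?thesis
    unfolding group_action_def group_hom_def group_hom_axioms_def
    using group_M group_BijGroup by auto
qed

lemma ideal_normal_A: "brace_ideal A M I \<Longrightarrow> I \<lhd> A"
  and ideal_normal_M: "brace_ideal A M I \<Longrightarrow> I \<lhd> M"
  and ideal_lam_closed: "\<lbrakk>brace_ideal A M I; a \<in> carrier A; x \<in> I\<rbrakk> \<Longrightarrow> lam a x \<in> I"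
  by (auto simp: brace_ideal_def)

lemma ideal_subgroup_A: "brace_ideal A M I \<Longrightarrow> subgroup I A"
  using ideal_normal_A normal_imp_subgroup by blast

lemma ideal_subset: "brace_ideal A M I \<Longrightarrow> I \<subseteq> carrier A"
  using ideal_subgroup_A subgroup.subset by blast

lemma r_coset_M_eq_A:
  assumes I: "brace_ideal A M I" and x: "x \<in> carrier A"
  shows "I #>\<^bsub>M\<^esub> x = I #>\<^bsub>A\<^esub> x"
proof -
  interpret IA: normal I A by (rule ideal_normal_A[OF I])
  interpret IM: normal I M by (rule ideal_normal_M[OF I])
  have "x <#\<^bsub>M\<^esub> I = x <#\<^bsub>A\<^esub> I"
  proof
    show "x <#\<^bsub>M\<^esub> I \<subseteq> x <#\<^bsub>A\<^esub> I"
      unfolding l_coset_def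
      using M_mult_eq_add_lam[OF x] ideal_lam_closed[OF I x] ideal_subset[OF I] by blast
    show "x <#\<^bsub>A\<^esub> I \<subseteq> x <#\<^bsub>M\<^esub> I"
      unfolding l_coset_def
      using add_eq_M_mult_lam[OF x] ideal_lam_closed[OF I M_inv_closed[OF x]] ideal_subset[OF I] by blast
  qed
  then show ?thesis using IM.coset_eq IA.coset_eq x carrier_M by auto
qed

lemma Mod_M_carrier: "brace_ideal A M I \<Longrightarrow> carrier (M Mod I) = (\<lambda>x. I #>\<^bsub>A\<^esub> x) ` carrier A"
  using r_coset_M_eq_A carrier_M by (auto simp: carrier_FactGroup)

lemma Mod_A_mult:
  "\<lbrakk>brace_ideal A M I; x \<in> carrier A; y \<in> carrier A\<rbrakk> \<Longrightarrow>
   (I #>\<^bsub>A\<^esub> x) \<otimes>\<^bsub>A Mod I\<^esub> (I #>\<^bsub>A\<^esub> y) = I #>\<^bsub>A\<^esub> (x \<otimes>\<^bsub>A\<^esub> y)"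
  using normal.rcos_sum[OF ideal_normal_A] by simp

lemma Mod_M_mult:
  "\<lbrakk>brace_ideal A M I; x \<in> carrier A; y \<in> carrier A\<rbrakk> \<Longrightarrow>
   (I #>\<^bsub>A\<^esub> x) \<otimes>\<^bsub>M Mod I\<^esub> (I #>\<^bsub>A\<^esub> y) = I #>\<^bsub>A\<^esub> (x \<otimes>\<^bsub>M\<^esub> y)"
  using normal.rcos_sum[OF ideal_normal_M, of I x y] carrier_M by (simp add: r_coset_M_eq_A)

lemma Mod_A_inv:
  "\<lbrakk>brace_ideal A M I; x \<in> carrier A\<rbrakk> \<Longrightarrow> inv\<^bsub>A Mod I\<^esub> (I #>\<^bsub>A\<^esub> x) = I #>\<^bsub>A\<^esub> (inv\<^bsub>A\<^esub> x)"
  using normal.inv_FactGroup[OF ideal_normal_A] normal.rcos_inv[OF ideal_normal_A]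
  by (simp add: carrier_FactGroup)

lemma projection_hom_A: "brace_ideal A M I \<Longrightarrow> group_hom A (A Mod I) (\<lambda>x. I #>\<^bsub>A\<^esub> x)"
  using normal.r_coset_hom_Mod[OF ideal_normal_A] normal.factorgroup_is_group[OF ideal_normal_A]
  by (simp add: group_hom_def group_hom_axioms_def group_A)

lemma projection_hom_M:
  assumes I: "brace_ideal A M I"
  shows "group_hom M (M Mod I) (\<lambda>x. I #>\<^bsub>A\<^esub> x)"
proof -
  have "(\<lambda>x. I #>\<^bsub>A\<^esub> x) \<in> hom M (M Mod I)"
    by (rule homI)
      (use I in \<open>auto simp: carrier_M Mod_M_carrier Mod_M_mult simp del: mult_FactGroup\<close>)
  then show ?thesis
    using normal.factorgroup_is_group[OF ideal_normal_M[OF I]]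
    by (simp add: group_hom_def group_hom_axioms_def group_M)
qed

lemma quotient_brace:
  assumes I: "brace_ideal A M I"
  shows "brace (A Mod I) (M Mod I)"
  unfolding brace_def
proof (intro conjI ballI)
  show "group (A Mod I)" "group (M Mod I)"
    using normal.factorgroup_is_group ideal_normal_A ideal_normal_M I by blast+
  show "carrier (A Mod I) = carrier (M Mod I)" using Mod_M_carrier[OF I] by (simp add: carrier_FactGroup)
  fix U V W assume "U \<in> carrier (A Mod I)" "V \<in> carrier (A Mod I)" "W \<in> carrier (A Mod I)"
  then obtain x y w where "x \<in> carrier A" "y \<in> carrier A" "w \<in> carrier A"
    and "U = I #>\<^bsub>A\<^esub> x" "V = I #>\<^bsub>A\<^esub> y" "W = I #>\<^bsub>A\<^esub> w"
    by (auto simp: carrier_FactGroup)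
  then show "U \<otimes>\<^bsub>M Mod I\<^esub> (V \<otimes>\<^bsub>A Mod I\<^esub> W) =
    U \<otimes>\<^bsub>M Mod I\<^esub> V \<otimes>\<^bsub>A Mod I\<^esub> inv\<^bsub>A Mod I\<^esub> U \<otimes>\<^bsub>A Mod I\<^esub> (U \<otimes>\<^bsub>M Mod I\<^esub> W)"
    using I by (simp add: Mod_A_mult Mod_M_mult Mod_A_inv brace_distrib del: mult_FactGroup)
qed

lemma Mod_lam:
  "\<lbrakk>brace_ideal A M I; x \<in> carrier A; y \<in> carrier A\<rbrakk> \<Longrightarrow>
   brace_lambda (A Mod I) (M Mod I) (I #>\<^bsub>A\<^esub> x) (I #>\<^bsub>A\<^esub> y) = I #>\<^bsub>A\<^esub> lam x y"
  by (simp add: brace_lambda_def Mod_A_mult Mod_M_mult Mod_A_inv del: mult_FactGroup)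

lemma quotient_skew_brace: "brace_ideal A M I \<Longrightarrow> skew_brace (A Mod I) (M Mod I)"
  by (rule skew_brace.intro, rule quotient_brace)

lemma preimage_ideal:
  assumes I: "brace_ideal A M I" and J: "brace_ideal (A Mod I) (M Mod I) J"
  shows "brace_ideal A M {x \<in> carrier A. I #>\<^bsub>A\<^esub> x \<in> J}"
  unfolding brace_ideal_def
proof (intro conjI ballI)
  show "{x \<in> carrier A. I #>\<^bsub>A\<^esub> x \<in> J} \<lhd> A"
    using normal.preimage_normal[OF _ projection_hom_A[OF I]] J by (auto simp: brace_ideal_def)
  have "{x \<in> carrier M. I #>\<^bsub>A\<^esub> x \<in> J} \<lhd> M"
    using normal.preimage_normal[OF _ projection_hom_M[OF I]] J by (auto simp: brace_ideal_def)
  then show "{x \<in> carrier A. I #>\<^bsub>A\<^esub> x \<in> J} \<lhd> M" using carrier_M by simp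
  fix b assume b: "b \<in> carrier A"
  show "lam b ` {x \<in> carrier A. I #>\<^bsub>A\<^esub> x \<in> J} \<subseteq> {x \<in> carrier A. I #>\<^bsub>A\<^esub> x \<in> J}"
    using J Mod_lam[OF I b] b by (force simp: brace_ideal_def carrier_FactGroup)
qed

lemma image_ideal:
  assumes I: "brace_ideal A M I" and K: "brace_ideal A M K"
  shows "brace_ideal (A Mod I) (M Mod I) (quot_img A K I)"
  unfolding brace_ideal_def quot_img_def
proof (intro conjI ballI)
  show "(\<lambda>x. I #>\<^bsub>A\<^esub> x) ` K \<lhd> A Mod I"
    using normal.surj_hom_normal_subgroup[OF ideal_normal_A[OF K] projection_hom_A[OF I]]
    by (simp add: carrier_FactGroup)
  show "(\<lambda>x. I #>\<^bsub>A\<^esub> x) ` K \<lhd> M Mod I"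
    using normal.surj_hom_normal_subgroup[OF ideal_normal_M[OF K] projection_hom_M[OF I]]
    by (simp add: Mod_M_carrier[OF I] carrier_M)
  fix U assume "U \<in> carrier (A Mod I)"
  then obtain b where b: "b \<in> carrier A" "U = I #>\<^bsub>A\<^esub> b" by (auto simp: carrier_FactGroup)
  show "brace_lambda (A Mod I) (M Mod I) U ` (\<lambda>x. I #>\<^bsub>A\<^esub> x) ` K \<subseteq> (\<lambda>x. I #>\<^bsub>A\<^esub> x) ` K"
    using b Mod_lam[OF I b(1)] ideal_lam_closed[OF K b(1)] ideal_subset[OF K] by auto
qed

section \<open>The center of a brace\<close>

lemma brace_center_iff:
  "a \<in> brace_center A M \<longleftrightarrow>
     a \<in> center A \<and> a \<in> center M \<and> (\<forall>b\<in>carrier A. a \<otimes>\<^bsub>M\<^esub> b = a \<otimes>\<^bsub>A\<^esub> b)"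
proof -
  have "a \<in> brace_soc A M \<longleftrightarrow> a \<in> center A \<and> (\<forall>b\<in>carrier A. a \<otimes>\<^bsub>M\<^esub> b = a \<otimes>\<^bsub>A\<^esub> b)"
    unfolding brace_soc_def center_def using lam_eq_iff by blast
  moreover have "a \<in> center A \<Longrightarrow> a \<in> carrier A" by (simp add: center_def)
  ultimately show ?thesis
    unfolding brace_center_def center_def[of M] carrier_M by blast
qed

lemma brace_center_closed: "a \<in> brace_center A M \<Longrightarrow> a \<in> carrier A"
  by (simp add: brace_center_iff center_def)

lemma one_in_brace_center: "\<one>\<^bsub>A\<^esub> \<in> brace_center A M"
  using carrier_M by (simp add: brace_center_iff center_def one_M)

lemma brace_center_M_mult_eq_add:
  "\<lbrakk>a \<in> brace_center A M; b \<in> carrier A\<rbrakk> \<Longrightarrow> a \<otimes>\<^bsub>M\<^esub> b = a \<otimes>\<^bsub>A\<^esub> b"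
  by (simp add: brace_center_iff)

lemma brace_center_inv_M_eq_A:
  assumes a: "a \<in> brace_center A M"
  shows "inv\<^bsub>M\<^esub> a = inv\<^bsub>A\<^esub> a"
proof -
  have ac: "a \<in> carrier A" using brace_center_closed[OF a] .
  have "inv\<^bsub>M\<^esub> a \<otimes>\<^bsub>A\<^esub> a = a \<otimes>\<^bsub>A\<^esub> inv\<^bsub>M\<^esub> a"
    using a ac by (simp add: brace_center_iff center_def)
  also have "\<dots> = \<one>\<^bsub>A\<^esub>" using brace_center_M_mult_eq_add[OF a] ac by (metis M_inv_closed M_r_inv)
  finally show ?thesis using ac by (simp add: A.inv_equality)
qed

lemma brace_center_subgroup_M: "subgroup (brace_center A M) M"
proof (rule M.subgroupI)
  show "brace_center A M \<subseteq> carrier M" using brace_center_closed carrier_M by blast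
  show "brace_center A M \<noteq> {}" using one_in_brace_center by blast
next
  fix a assume a: "a \<in> brace_center A M"
  have ac: "a \<in> carrier A" using brace_center_closed[OF a] .
  have "inv\<^bsub>M\<^esub> a \<otimes>\<^bsub>M\<^esub> b = inv\<^bsub>M\<^esub> a \<otimes>\<^bsub>A\<^esub> b" if b: "b \<in> carrier A" for b
  proof -
    have "a \<otimes>\<^bsub>M\<^esub> (inv\<^bsub>M\<^esub> a \<otimes>\<^bsub>M\<^esub> b) = a \<otimes>\<^bsub>M\<^esub> (inv\<^bsub>M\<^esub> a \<otimes>\<^bsub>A\<^esub> b)"
      using brace_center_M_mult_eq_add[OF a] brace_center_inv_M_eq_A[OF a] ac b
      by (simp add: M_assoc[symmetric] A.m_assoc[symmetric])
    then show ?thesis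
      using ac b carrier_M by (metis M.l_cancel M_inv_closed M_mult_closed A.m_closed)
  qed
  moreover have "inv\<^bsub>M\<^esub> a \<in> center A"
    using subgroup.m_inv_closed[OF A.center_subgroup] a by (simp add: brace_center_iff brace_center_inv_M_eq_A)
  moreover have "inv\<^bsub>M\<^esub> a \<in> center M"
    using subgroup.m_inv_closed[OF M.center_subgroup] a by (simp add: brace_center_iff)
  ultimately show "inv\<^bsub>M\<^esub> a \<in> brace_center A M" by (simp add: brace_center_iff)
next
  fix a a' assume a: "a \<in> brace_center A M" and a': "a' \<in> brace_center A M"
  have ac: "a \<in> carrier A" "a' \<in> carrier A" using brace_center_closed a a' by auto
  have "a \<otimes>\<^bsub>M\<^esub> a' \<otimes>\<^bsub>M\<^esub> b = a \<otimes>\<^bsub>M\<^esub> a' \<otimes>\<^bsub>A\<^esub> b" if b: "b \<in> carrier A" for b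
  proof -
    have "a \<otimes>\<^bsub>M\<^esub> a' \<otimes>\<^bsub>M\<^esub> b = a \<otimes>\<^bsub>M\<^esub> (a' \<otimes>\<^bsub>M\<^esub> b)" using ac b by (rule M_assoc)
    also have "\<dots> = a \<otimes>\<^bsub>A\<^esub> a' \<otimes>\<^bsub>A\<^esub> b"
      using brace_center_M_mult_eq_add[OF a] brace_center_M_mult_eq_add[OF a'] ac b by (simp add: A.m_assoc)
    finally show ?thesis using brace_center_M_mult_eq_add[OF a] ac by simp
  qed
  moreover have "a \<otimes>\<^bsub>M\<^esub> a' \<in> center A"
    using subgroup.m_closed[OF A.center_subgroup] a a' ac
    by (simp add: brace_center_iff brace_center_M_mult_eq_add)
  moreover have "a \<otimes>\<^bsub>M\<^esub> a' \<in> center M"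
    using subgroup.m_closed[OF M.center_subgroup] a a' by (simp add: brace_center_iff)
  ultimately show "a \<otimes>\<^bsub>M\<^esub> a' \<in> brace_center A M" by (simp add: brace_center_iff)
qed

lemma brace_center_subgroup_A: "subgroup (brace_center A M) A"
proof (rule A.subgroupI)
  show "brace_center A M \<subseteq> carrier A" using brace_center_closed by blast
  show "brace_center A M \<noteq> {}" using one_in_brace_center by blast
  show "inv\<^bsub>A\<^esub> a \<in> brace_center A M" if "a \<in> brace_center A M" for a
    using subgroup.m_inv_closed[OF brace_center_subgroup_M that] brace_center_inv_M_eq_A[OF that] by simp
  show "a \<otimes>\<^bsub>A\<^esub> b \<in> brace_center A M" if "a \<in> brace_center A M" "b \<in> brace_center A M" for a b
    using subgroup.m_closed[OF brace_center_subgroup_M that] brace_center_M_mult_eq_add[OF that(1)]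
      brace_center_closed[OF that(2)] by simp
qed

lemma brace_center_ideal: "brace_ideal A M (brace_center A M)"
  unfolding brace_ideal_def
proof (intro conjI ballI)
  show "brace_center A M \<lhd> A"
    using A.central_subgroup_normal[OF brace_center_subgroup_A] brace_center_iff by blast
  show "brace_center A M \<lhd> M"
    using M.central_subgroup_normal[OF brace_center_subgroup_M] brace_center_iff by blast
  fix b assume b: "b \<in> carrier A"
  have "lam b a = a" if a: "a \<in> brace_center A M" for a
  proof -
    have "a \<in> center A" "a \<in> center M" using a brace_center_iff by blast+
    then have "b \<otimes>\<^bsub>M\<^esub> a = a \<otimes>\<^bsub>M\<^esub> b" "a \<otimes>\<^bsub>A\<^esub> b = b \<otimes>\<^bsub>A\<^esub> a"
      using b carrier_M by (auto simp: center_def)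
    then have "b \<otimes>\<^bsub>M\<^esub> a = b \<otimes>\<^bsub>A\<^esub> a"
      using brace_center_M_mult_eq_add[OF a b] by simp
    then show ?thesis
      using b brace_center_closed[OF a] by (simp add: lam_eq_iff)
  qed
  then show "lam b ` brace_center A M \<subseteq> brace_center A M" by auto
qed

lemma Mod_brace_center_iff:
  assumes Z: "brace_ideal A M Z" and x: "x \<in> carrier A"
  shows "Z #>\<^bsub>A\<^esub> x \<in> brace_center (A Mod Z) (M Mod Z) \<longleftrightarrow>
    (\<forall>y\<in>carrier A. Z #>\<^bsub>A\<^esub> (x \<otimes>\<^bsub>A\<^esub> y) = Z #>\<^bsub>A\<^esub> (y \<otimes>\<^bsub>A\<^esub> x) \<and>
       Z #>\<^bsub>A\<^esub> (x \<otimes>\<^bsub>M\<^esub> y) = Z #>\<^bsub>A\<^esub> (y \<otimes>\<^bsub>M\<^esub> x) \<and>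
       Z #>\<^bsub>A\<^esub> (x \<otimes>\<^bsub>M\<^esub> y) = Z #>\<^bsub>A\<^esub> (x \<otimes>\<^bsub>A\<^esub> y))"
proof -
  interpret Q: skew_brace "A Mod Z" "M Mod Z" by (rule quotient_skew_brace[OF Z])
  have xQ: "Z #>\<^bsub>A\<^esub> x \<in> carrier (A Mod Z)" "Z #>\<^bsub>A\<^esub> x \<in> carrier (M Mod Z)"
    using x Mod_M_carrier[OF Z] by (auto simp: carrier_FactGroup)
  have "Z #>\<^bsub>A\<^esub> x \<in> center (A Mod Z) \<longleftrightarrow>
      (\<forall>y\<in>carrier A. Z #>\<^bsub>A\<^esub> (x \<otimes>\<^bsub>A\<^esub> y) = Z #>\<^bsub>A\<^esub> (y \<otimes>\<^bsub>A\<^esub> x))"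
    using xQ(1) x unfolding center_def carrier_FactGroup[of A Z]
    by (simp add: Mod_A_mult[OF Z] del: mult_FactGroup)
  moreover have "Z #>\<^bsub>A\<^esub> x \<in> center (M Mod Z) \<longleftrightarrow>
      (\<forall>y\<in>carrier A. Z #>\<^bsub>A\<^esub> (x \<otimes>\<^bsub>M\<^esub> y) = Z #>\<^bsub>A\<^esub> (y \<otimes>\<^bsub>M\<^esub> x))"
    using xQ(2) x unfolding center_def Mod_M_carrier[OF Z]
    by (simp add: Mod_M_mult[OF Z] del: mult_FactGroup)
  moreover have "(\<forall>V\<in>carrier (A Mod Z). (Z #>\<^bsub>A\<^esub> x) \<otimes>\<^bsub>M Mod Z\<^esub> V = (Z #>\<^bsub>A\<^esub> x) \<otimes>\<^bsub>A Mod Z\<^esub> V) \<longleftrightarrow>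
      (\<forall>y\<in>carrier A. Z #>\<^bsub>A\<^esub> (x \<otimes>\<^bsub>M\<^esub> y) = Z #>\<^bsub>A\<^esub> (x \<otimes>\<^bsub>A\<^esub> y))"
    using x unfolding carrier_FactGroup[of A Z]
    by (simp add: Mod_A_mult[OF Z] Mod_M_mult[OF Z] del: mult_FactGroup)
  ultimately show ?thesis
    unfolding Q.brace_center_iff carrier_FactGroup[of A Z] by blast
qed

lemma Mod_brace_center_mono:
  assumes I: "brace_ideal A M I" and Z: "brace_ideal A M Z" and IZ: "I \<subseteq> Z" and x: "x \<in> carrier A"
    and central: "I #>\<^bsub>A\<^esub> x \<in> brace_center (A Mod I) (M Mod I)"
  shows "Z #>\<^bsub>A\<^esub> x \<in> brace_center (A Mod Z) (M Mod Z)"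
  unfolding Mod_brace_center_iff[OF Z x]
proof
  fix y assume y: "y \<in> carrier A"
  have coset_mono: "Z #>\<^bsub>A\<^esub> u = Z #>\<^bsub>A\<^esub> v"
    if "u \<in> carrier A" "v \<in> carrier A" "I #>\<^bsub>A\<^esub> u = I #>\<^bsub>A\<^esub> v" for u v
    using A.r_coset_eq_mono[OF ideal_subgroup_A[OF I] ideal_subgroup_A[OF Z] IZ that] .
  have "I #>\<^bsub>A\<^esub> (x \<otimes>\<^bsub>A\<^esub> y) = I #>\<^bsub>A\<^esub> (y \<otimes>\<^bsub>A\<^esub> x)"
    "I #>\<^bsub>A\<^esub> (x \<otimes>\<^bsub>M\<^esub> y) = I #>\<^bsub>A\<^esub> (y \<otimes>\<^bsub>M\<^esub> x)"
    "I #>\<^bsub>A\<^esub> (x \<otimes>\<^bsub>M\<^esub> y) = I #>\<^bsub>A\<^esub> (x \<otimes>\<^bsub>A\<^esub> y)"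
    using central y unfolding Mod_brace_center_iff[OF I x] by blast+
  then show "Z #>\<^bsub>A\<^esub> (x \<otimes>\<^bsub>A\<^esub> y) = Z #>\<^bsub>A\<^esub> (y \<otimes>\<^bsub>A\<^esub> x) \<and>
      Z #>\<^bsub>A\<^esub> (x \<otimes>\<^bsub>M\<^esub> y) = Z #>\<^bsub>A\<^esub> (y \<otimes>\<^bsub>M\<^esub> x) \<and>
      Z #>\<^bsub>A\<^esub> (x \<otimes>\<^bsub>M\<^esub> y) = Z #>\<^bsub>A\<^esub> (x \<otimes>\<^bsub>A\<^esub> y)"
    using coset_mono x y by (meson A.m_closed M_mult_closed)
qed

section \<open>Braces of prime power order\<close>

lemma ideal_of_order_p_central:
  fixes p :: nat
  assumes ord: "card (carrier A) = p ^ m" and p: "Factorial_Ring.prime p"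
    and J: "brace_ideal A M J" "card J = p"
  shows "J \<subseteq> brace_center A M"
proof
  fix j assume j: "j \<in> J"
  have jc: "j \<in> carrier A" using j ideal_subset[OF J(1)] by blast
  have ord_A: "order A = p ^ m" and ord_M: "order M = p ^ m"
    using ord carrier_M by (simp_all add: order_def)
  have "finite J" using J(2) prime_gt_0_nat[OF p] card_ge_0_finite by blast
  have "(\<lambda>b \<in> carrier A. lam a b) j = j" if a: "a \<in> carrier M" for a
  proof (rule group_action.p_group_fixes_invariant_subset[OF lam_action ord_M p
        ideal_subset[OF J(1)] \<open>finite J\<close> _ subgroup.one_closed[OF ideal_subgroup_A[OF J(1)]] _ _ j a])
    show "card J \<le> p" using J(2) by simp
    show "(\<lambda>b \<in> carrier A. lam g b) \<one>\<^bsub>A\<^esub> = \<one>\<^bsub>A\<^esub>" if "g \<in> carrier M" for g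
      using that carrier_M by simp
    show "(\<lambda>b \<in> carrier A. lam g b) y \<in> J" if "g \<in> carrier M" "y \<in> J" for g y
      using that carrier_M ideal_lam_closed[OF J(1)] ideal_subset[OF J(1)] by auto
  qed
  then have "a \<otimes>\<^bsub>M\<^esub> j = a \<otimes>\<^bsub>A\<^esub> j" if "a \<in> carrier A" for a
    using that jc lam_eq_iff carrier_M by simp
  moreover have "a \<otimes>\<^bsub>A\<^esub> j = j \<otimes>\<^bsub>A\<^esub> a" if "a \<in> carrier A" for a
    using A.normal_subgroup_of_prime_order_central[OF ord_A p ideal_normal_A[OF J(1)] J(2) j that] .
  moreover have "a \<otimes>\<^bsub>M\<^esub> j = j \<otimes>\<^bsub>M\<^esub> a" if "a \<in> carrier A" for a
    using M.normal_subgroup_of_prime_order_central[OF ord_M p ideal_normal_M[OF J(1)] J(2) j] that carrier_M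
    by simp
  ultimately show "j \<in> brace_center A M"
    using jc carrier_M by (simp add: brace_center_iff center_def)
qed

lemma card_quot_img:
  assumes I: "brace_ideal A M I" and K: "brace_ideal A M K" and IK: "I \<subseteq> K"
  shows "card (quot_img A K I) * card I = card K"
proof -
  let ?K = "A\<lparr>carrier := K\<rparr>"
  have "group ?K" using subgroup.subgroup_is_group[OF ideal_subgroup_A[OF K] group_A] .
  moreover have "subgroup I ?K"
    using A.subgroup_incl[OF ideal_subgroup_A[OF I] ideal_subgroup_A[OF K] IK] .
  moreover have "rcosets\<^bsub>?K\<^esub> I = quot_img A K I"
    unfolding RCOSETS_def r_coset_def quot_img_def by auto
  ultimately show ?thesis using group.lagrange[of ?K I] by (simp add: order_def)
qed

lemma prime_order_factor_central:
  fixes p :: nat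
  assumes ord: "card (carrier A) = p ^ k" and p: "Factorial_Ring.prime p"
    and I: "brace_ideal A M I" and K: "brace_ideal A M K" and IK: "I \<subseteq> K"
    and q: "Factorial_Ring.prime (card (quot_img A K I))"
  shows "quot_img A K I \<subseteq> brace_center (A Mod I) (M Mod I)"
proof -
  interpret Q: skew_brace "A Mod I" "M Mod I" by (rule quotient_skew_brace[OF I])
  have "card (quot_img A K I) dvd card K"
    using card_quot_img[OF I K IK] by (metis dvd_triv_left)
  also have "card K dvd p ^ k"
    using A.lagrange[OF ideal_subgroup_A[OF K]] ord by (metis dvd_triv_right order_def)
  finally have "card (quot_img A K I) = p"
    using q p by (metis prime_dvd_power primes_dvd_imp_eq)
  moreover have "card (carrier (A Mod I)) dvd p ^ k"
    using A.lagrange[OF ideal_subgroup_A[OF I]] ord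
    by (simp add: FactGroup_def order_def) (metis dvd_triv_left)
  then obtain m where "card (carrier (A Mod I)) = p ^ m"
    using divides_primepow_nat[OF p] by auto
  ultimately show ?thesis
    using Q.ideal_of_order_p_central[OF _ p image_ideal[OF I K]] by blast
qed

lemma upper_zeta_Suc:
  "upper_zeta (Suc k) A M =
     {x \<in> carrier A. upper_zeta k A M #>\<^bsub>A\<^esub> x \<in>
        brace_center (A Mod upper_zeta k A M) (M Mod upper_zeta k A M)}"
  by (simp add: Let_def)

lemma upper_zeta_ideal: "brace_ideal A M (upper_zeta k A M)"
proof (induction k)
  case 0
  show ?case
    using A.one_is_normal M.one_is_normal one_M by (simp add: brace_ideal_def)
next
  case (Suc k)
  show ?case
    unfolding upper_zeta_Suc
    using preimage_ideal[OF Suc skew_brace.brace_center_ideal[OF quotient_skew_brace[OF Suc]]] .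
qed

lemma prime_factor_in_next_upper_zeta:
  fixes p :: nat
  assumes ord: "card (carrier A) = p ^ k" and p: "Factorial_Ring.prime p"
    and I: "brace_ideal A M I" and K: "brace_ideal A M K" and IK: "I \<subseteq> K"
    and q: "Factorial_Ring.prime (card (quot_img A K I))"
    and I_zeta: "I \<subseteq> upper_zeta i A M"
  shows "K \<subseteq> upper_zeta (Suc i) A M"
proof
  fix x assume x: "x \<in> K"
  have xc: "x \<in> carrier A" using x ideal_subset[OF K] by blast
  have "I #>\<^bsub>A\<^esub> x \<in> brace_center (A Mod I) (M Mod I)"
    using prime_order_factor_central[OF ord p I K IK q] x unfolding quot_img_def by blast
  then show "x \<in> upper_zeta (Suc i) A M"
    unfolding upper_zeta_Suc using Mod_brace_center_mono[OF I upper_zeta_ideal I_zeta xc] xc by blast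
qed

lemma finite_supersoluble_prime_chain:
  assumes "supersoluble A M" and "finite (carrier A)"
  obtains I :: "nat \<Rightarrow> 'a set" and n where "I 0 = {\<one>\<^bsub>A\<^esub>}" and "I n = carrier A"
    and "\<And>i. i \<le> n \<Longrightarrow> brace_ideal A M (I i)" and "\<And>i. i < n \<Longrightarrow> I i \<subseteq> I (Suc i)"
    and "\<And>i. i < n \<Longrightarrow> Factorial_Ring.prime (card (quot_img A (I (Suc i)) (I i)))"
proof -
  obtain I :: "nat \<Rightarrow> 'a set" and n where
    I0: "I 0 = {\<one>\<^bsub>A\<^esub>}" and In: "I n = carrier A" and ideals: "\<forall>i\<le>n. brace_ideal A M (I i)" and
    factors: "\<forall>i<n. I i \<subseteq> I (Suc i) \<and>
        ((infinite (quot_img A (I (Suc i)) (I i)) \<and>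
          cyclic_group ((A Mod I i)\<lparr>carrier := quot_img A (I (Suc i)) (I i)\<rparr>) \<and>
          quot_img A (I (Suc i)) (I i) \<subseteq> brace_soc (A Mod I i) (M Mod I i))
         \<or> Factorial_Ring.prime (card (quot_img A (I (Suc i)) (I i))))"
    using assms(1) unfolding supersoluble_def by blast
  have "finite (quot_img A (I (Suc i)) (I i))" if "i < n" for i
    using ideal_subset ideals that assms(2) unfolding quot_img_def
    by (metis Suc_leI finite_imageI finite_subset)
  then show ?thesis
    using that[OF I0 In] ideals factors by auto
qed

end

theorem theorem3p7:
  fixes A M :: "'a monoid" and p :: nat
  assumes "Factorial_Ring.prime p"
    and "brace A M"
    and "finite (carrier A)"
    and "\<exists>k. card (carrier A) = p ^ k"
    and "supersoluble A M"
  shows "centrally_nilpotent A M"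
proof -
  interpret skew_brace A M by (rule skew_brace.intro[OF assms(2)])
  obtain k where ord: "card (carrier A) = p ^ k" using assms(4) by blast
  obtain I n where I0: "I 0 = {\<one>\<^bsub>A\<^esub>}" and In: "I n = carrier A"
    and ideals: "\<And>i. i \<le> n \<Longrightarrow> brace_ideal A M (I i)" and chain: "\<And>i. i < n \<Longrightarrow> I i \<subseteq> I (Suc i)"
    and prime_factors: "\<And>i. i < n \<Longrightarrow> Factorial_Ring.prime (card (quot_img A (I (Suc i)) (I i)))"
    using finite_supersoluble_prime_chain[OF assms(5,3)] by blast
  have "I i \<subseteq> upper_zeta i A M" if "i \<le> n" for i
    using that
  proof (induction i)
    case 0
    then show ?case using I0 by simp
  next
    case (Suc i)
    then show ?case
      using prime_factor_in_next_upper_zeta[OF ord assms(1) ideals ideals chain prime_factors]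
      by simp
  qed
  then have "upper_zeta n A M = carrier A"
    using In ideal_subset[OF upper_zeta_ideal] by blast
  then show ?thesis unfolding centrally_nilpotent_def by blast
qed

end
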